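(* Let $p\ge 2$ and $d\in\{0,\dots,9\}$ be integers. The sequence $\big(P_{(d,10^n-1,p)}\big)_{n\ge p}$ converges, as $n\to\infty$, to $$\frac{1}{10}+\frac{n_{(d,p)}+m_{(d,p)}-9l_{(d,p)}-d\,k_{(d,p)}}{9\times10^{p-1}}+\frac{1}{90}\ln\Big(\frac{10^{p-1}+d}{10^{p-1}}\Big)+\frac{1}{9}\ln\Big(\frac{10^{p}}{10^{p}-10+d+1}\Big),$$ where $k_{(d,p)}=\sum_{j=10^{p-2}}^{10^{p-1}-1}\ln\frac{10j+d+1}{10j+d}$, $l_{(d,p)}=\sum_{j=10^{p-2}}^{10^{p-1}-1}j\ln\frac{10j+d+1}{10j+d}$, $m_{(d,p)}=\sum_{j=10^{p-2}}^{10^{p-1}-2}\ln\frac{10(j+1)+d}{10j+d+1}$, and $n_{(d,p)}=\sum_{j=10^{p-2}}^{10^{p-1}-2}j\ln\frac{10(j+1)+d}{10j+d+1}$.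
   Context: For an integer $x\ge 10^{p-1}$, the "$p$-th digit of $x$" is the $p$-th digit of its decimal expansion counted from the left. For integers $p\ge2$, $d\in\{0,\dots,9\}$ and $m\ge 10^{p-1}$, let $N_d(m)$ be the number of integers $x$ with $10^{p-1}\le x\le m$ whose $p$-th digit is $d$. For $N\ge 10^{p-1}$, $$P_{(d,N,p)}=\frac{1}{N+1-10^{p-1}}\sum_{m=10^{p-1}}^{N}\frac{N_d(m)}{m+1-10^{p-1}},$$ which is the probability that the $p$-th digit of $x$ is $d$ when $m$ is chosen uniformly in $\{10^{p-1},\dots,N\}$ and then $x$ uniformly in $\{10^{p-1},\dots,m\}$. Here $\ln$ is the natural logarithm. *)

theory Defs
  imports Complex_Main
begin

definition num_digits :: "nat \<Rightarrow> nat" where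
  "num_digits x = (LEAST k. x < 10 ^ k)"

text \<open>The p-th decimal digit of x counted from the left (p \<ge> 1),
  meaningful for x \<ge> 10^(p-1).\<close>
definition pth_digit :: "nat \<Rightarrow> nat \<Rightarrow> nat" where
  "pth_digit p x = (x div 10 ^ (num_digits x - p)) mod 10"

definition Ncount :: "nat \<Rightarrow> nat \<Rightarrow> nat \<Rightarrow> nat" where
  "Ncount p d m = card {x. 10 ^ (p - 1) \<le> x \<and> x \<le> m \<and> pth_digit p x = d}"

definition Pprob :: "nat \<Rightarrow> nat \<Rightarrow> nat \<Rightarrow> real" where
  "Pprob d N p = (1 / (real N + 1 - 10 ^ (p - 1))) *
     (\<Sum>m = 10 ^ (p - 1)..N. real (Ncount p d m) / (real m + 1 - 10 ^ (p - 1)))"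

definition kdp :: "nat \<Rightarrow> nat \<Rightarrow> real" where
  "kdp d p = (\<Sum>j = 10 ^ (p - 2)..10 ^ (p - 1) - 1.
      ln ((10 * real j + real d + 1) / (10 * real j + real d)))"

definition ldp :: "nat \<Rightarrow> nat \<Rightarrow> real" where
  "ldp d p = (\<Sum>j = 10 ^ (p - 2)..10 ^ (p - 1) - 1.
      real j * ln ((10 * real j + real d + 1) / (10 * real j + real d)))"

definition mdp :: "nat \<Rightarrow> nat \<Rightarrow> real" where
  "mdp d p = (\<Sum>j = 10 ^ (p - 2)..10 ^ (p - 1) - 2.
      ln ((10 * (real j + 1) + real d) / (10 * real j + real d + 1)))"

definition ndp :: "nat \<Rightarrow> nat \<Rightarrow> real" where
  "ndp d p = (\<Sum>j = 10 ^ (p - 2)..10 ^ (p - 1) - 2.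
      real j * ln ((10 * (real j + 1) + real d) / (10 * real j + real d + 1)))"

end

theory Submission
  imports Defs
begin

(* Split 10^(p-1) <= m < 10^(p-1+j) into the blocks of numbers with p+i digits, i < j.  In block i
   write m = q 10^i + r with 10^(p-1) <= q < 10^p and r < 10^i: the p-th digit of m is the last
   digit of q, so N_d(m) is affine in r, and summing N_d(m)/(m+1-10^(p-1)) over r gives
   10^i times a logarithmic weight of q up to an error bounded uniformly in i.  The i-th block
   sum is therefore 10^i C + O(1), and averaging over the geometrically growing blocks yields
   the limit C / (9 10^(p-1)).  Writing q = 10 j + e and summing by parts over j expresses C
   through k, l, m and n. *)

lemma sum_atLeastLessThan_mult_split:
  fixes f :: "nat \<Rightarrow> 'a::comm_monoid_add"
  assumes "a \<le> b"
  shows "(\<Sum>m\<in>{a * T..<b * T}. f m) = (\<Sum>q\<in>{a..<b}. \<Sum>r<T. f (q * T + r))"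
  using assms
proof (induction b rule: dec_induct)
  case base
  then show ?case by simp
next
  case (step b)
  have "(\<Sum>m\<in>{a * T..<Suc b * T}. f m) = (\<Sum>m\<in>{a * T..<b * T}. f m) + (\<Sum>m\<in>{b * T..<b * T + T}. f m)"
    using step.hyps by (simp add: sum.atLeastLessThan_concat add.commute)
  also have "(\<Sum>m\<in>{b * T..<b * T + T}. f m) = (\<Sum>r<T. f (b * T + r))"
    by (simp add: sum.atLeastLessThan_shift_0 add.commute atLeast0LessThan)
  finally show ?case using step by simp
qed

lemma sum_lessThan_consecutive_intervals:
  fixes f :: "nat \<Rightarrow> 'a::comm_monoid_add"
  assumes "mono g"
  shows "(\<Sum>i<j. \<Sum>m\<in>{g i..<g (Suc i)}. f m) = (\<Sum>m\<in>{g 0..<g j}. f m)"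
proof (induction j)
  case (Suc j)
  have "g 0 \<le> g j" "g j \<le> g (Suc j)" by (simp_all add: monoD[OF assms])
  then show ?case using Suc.IH by (simp only: sum.lessThan_Suc sum.atLeastLessThan_concat)
qed simp

lemma sum_atLeastLessThan_Suc_regroup:
  fixes g h :: "nat \<Rightarrow> 'a::comm_monoid_add"
  assumes "a \<le> n"
  shows "(\<Sum>j\<in>{a..<Suc n}. g j + h j) = h a + (\<Sum>j\<in>{a..<n}. g j + h (Suc j)) + g n"
proof -
  have "(\<Sum>j\<in>{a..<Suc n}. h j) = h a + (\<Sum>j\<in>{Suc a..<Suc n}. h j)"
    using assms by (intro sum.atLeast_Suc_lessThan) simp
  also have "\<dots> = h a + (\<Sum>j\<in>{a..<n}. h (Suc j))"
    by (simp only: sum.atLeast_Suc_lessThan_Suc_shift comp_def)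
  finally have h_sum: "(\<Sum>j\<in>{a..<Suc n}. h j) = h a + (\<Sum>j\<in>{a..<n}. h (Suc j))" .
  have g_sum: "(\<Sum>j\<in>{a..<Suc n}. g j) = (\<Sum>j\<in>{a..<n}. g j) + g n"
    using assms by simp
  show ?thesis unfolding sum.distrib h_sum g_sum by (simp add: ac_simps)
qed

lemma sum_lessThan_of_bool_less_telescope:
  fixes F :: "nat \<Rightarrow> 'a::ring_1"
  assumes "d < n"
  shows "(\<Sum>e<n. of_bool (d < e) * (F (Suc e) - F e)) = F n - F (Suc d)"
proof -
  have "(\<Sum>e<n. of_bool (d < e) * (F (Suc e) - F e)) = (\<Sum>e\<in>{Suc d..<n}. of_bool (d < e) * (F (Suc e) - F e))"
    by (rule sum.mono_neutral_right) auto
  also have "\<dots> = (\<Sum>e\<in>{Suc d..<n}. F (Suc e) - F e)" by simp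
  also have "\<dots> = F n - F (Suc d)" using assms by (intro sum_Suc_diff') simp
  finally show ?thesis .
qed

lemma sum_of_bool_mod_eq:
  fixes b d :: nat
  assumes "b * a \<le> q" "d < b"
  shows "(\<Sum>x\<in>{b * a..<q}. of_bool (x mod b = d) :: real) = real (q div b) - a + of_bool (d < q mod b)"
  using assms(1)
proof (induction q rule: dec_induct)
  case base
  then show ?case using assms(2) by simp
next
  case (step q)
  show ?case
  proof (cases "Suc (q mod b) = b")
    case True
    then have "Suc q div b = Suc (q div b)" "Suc q mod b = 0" by (simp_all add: div_Suc mod_Suc)
    then show ?thesis using step True assms(2) by auto
  next
    case False
    then have "Suc q div b = q div b" "Suc q mod b = Suc (q mod b)" by (simp_all add: div_Suc mod_Suc)
    then show ?thesis using step False assms(2) by auto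
  qed
qed

lemma num_digits_eqI:
  assumes "k \<ge> 1" "10 ^ (k - 1) \<le> x" "x < 10 ^ k"
  shows "num_digits x = k"
  unfolding num_digits_def
proof (rule Least_equality)
  show "x < 10 ^ k" by fact
next
  fix j assume "x < 10 ^ j"
  with assms(2) have "(10::nat) ^ (k - 1) < 10 ^ j" by linarith
  then show "k \<le> j" using assms(1) by simp
qed

lemma pth_digit_mult_power_add:
  assumes "p \<ge> 1" "10 ^ (p - 1) \<le> q" "q < 10 ^ p" "r < 10 ^ i"
  shows "pth_digit p (q * 10 ^ i + r) = q mod 10"
proof -
  have "q * 10 ^ i + r < (q + 1) * 10 ^ i" using assms(4) by simp
  also have "\<dots> \<le> 10 ^ p * 10 ^ i" using assms(3) by (intro mult_right_mono) auto
  finally have upper: "q * 10 ^ i + r < 10 ^ (p + i)" by (simp add: power_add)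
  have "(10::nat) ^ (p + i - 1) = 10 ^ (p - 1) * 10 ^ i"
    using assms(1) by (metis Nat.add_diff_assoc2 power_add)
  then have lower: "10 ^ (p + i - 1) \<le> q * 10 ^ i + r" using assms(2) by (simp add: trans_le_add1)
  have "num_digits (q * 10 ^ i + r) = p + i"
    using assms(1) lower upper by (intro num_digits_eqI) auto
  then show ?thesis using assms(4) by (simp add: pth_digit_def)
qed

lemma sum_pth_digit_mult_power_interval:
  assumes "p \<ge> 2" "d \<le> 9" "10 ^ (p - 1) \<le> q" "q \<le> 10 ^ p"
  shows "(\<Sum>x\<in>{10 ^ (p - 1) * 10 ^ i..<q * 10 ^ i}. of_bool (pth_digit p x = d) :: real)
    = 10 ^ i * (real (q div 10) - 10 ^ (p - 2) + of_bool (d < q mod 10))"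
proof -
  have A: "(10::nat) ^ (p - 1) = 10 * 10 ^ (p - 2)"
    using assms(1) power_minus_mult[of "p - 1" "10::nat"] by (simp add: mult.commute diff_diff_left numeral_2_eq_2)
  have "(\<Sum>x\<in>{10 ^ (p - 1) * 10 ^ i..<q * 10 ^ i}. of_bool (pth_digit p x = d) :: real)
      = (\<Sum>q'\<in>{10 ^ (p - 1)..<q}. \<Sum>r<10 ^ i. of_bool (pth_digit p (q' * 10 ^ i + r) = d))"
    using assms(3) by (rule sum_atLeastLessThan_mult_split)
  also have "\<dots> = (\<Sum>q'\<in>{10 ^ (p - 1)..<q}. \<Sum>r<(10::nat) ^ i. of_bool (q' mod 10 = d))"
    using assms(1,4) by (intro sum.cong refl) (simp add: pth_digit_mult_power_add)
  also have "\<dots> = 10 ^ i * (\<Sum>q'\<in>{10 * 10 ^ (p - 2)..<q}. of_bool (q' mod 10 = d))"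
    unfolding A by (simp add: sum_distrib_left)
  also have "\<dots> = 10 ^ i * (real (q div 10) - 10 ^ (p - 2) + of_bool (d < q mod 10))"
    using assms(2,3) unfolding A by (subst sum_of_bool_mod_eq) auto
  finally show ?thesis .
qed

lemma sum_pth_digit_below_power:
  assumes "p \<ge> 2" "d \<le> 9"
  shows "(\<Sum>x\<in>{10 ^ (p - 1)..<10 ^ (p - 1) * 10 ^ i}. of_bool (pth_digit p x = d) :: real)
    = 10 ^ (p - 2) * (10 ^ i - 1)"
proof (induction i)
  case (Suc i)
  have P: "(10::nat) ^ p = 10 * 10 ^ (p - 1)" "(10::nat) ^ (p - 1) = 10 * 10 ^ (p - 2)"
    using assms(1) power_minus_mult[of p "10::nat"] power_minus_mult[of "p - 1" "10::nat"]
    by (simp_all add: mult.commute diff_diff_left numeral_2_eq_2)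
  have "(\<Sum>x\<in>{10 ^ (p - 1)..<10 ^ (p - 1) * 10 ^ Suc i}. of_bool (pth_digit p x = d) :: real)
      = (\<Sum>x\<in>{10 ^ (p - 1)..<10 ^ (p - 1) * 10 ^ i}. of_bool (pth_digit p x = d))
        + (\<Sum>x\<in>{10 ^ (p - 1) * 10 ^ i..<10 ^ p * 10 ^ i}. of_bool (pth_digit p x = d))"
    unfolding P(1) by (subst sum.atLeastLessThan_concat) (simp_all add: ac_simps)
  also have "\<dots> = 10 ^ (p - 2) * (10 ^ i - 1)
      + 10 ^ i * (real (10 ^ p div 10) - 10 ^ (p - 2) + of_bool (d < 10 ^ p mod 10))"
    using assms by (simp only: Suc.IH sum_pth_digit_mult_power_interval[OF assms] one_le_power power_increasing)
  also have "\<dots> = 10 ^ (p - 2) * (10 ^ Suc i - 1)"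
    unfolding P by (simp add: algebra_simps)
  finally show ?case .
qed simp

lemma Ncount_mult_power_add:
  assumes "p \<ge> 2" "d \<le> 9" "10 ^ (p - 1) \<le> q" "q < 10 ^ p" "r < 10 ^ i"
  shows "real (Ncount p d (q * 10 ^ i + r))
    = 10 ^ i * (real (q div 10) + of_bool (d < q mod 10)) - 10 ^ (p - 2) + of_bool (q mod 10 = d) * (real r + 1)"
proof -
  let ?c = "\<lambda>x. of_bool (pth_digit p x = d) :: real"
  have le: "(10::nat) ^ (p - 1) \<le> 10 ^ (p - 1) * 10 ^ i" "10 ^ (p - 1) * 10 ^ i \<le> q * 10 ^ i"
    "q * 10 ^ i \<le> q * 10 ^ i + Suc r"
    using assms(3) by simp_all
  have counted_set: "{x. 10 ^ (p - 1) \<le> x \<and> x \<le> q * 10 ^ i + r \<and> pth_digit p x = d}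
      = {10 ^ (p - 1)..<q * 10 ^ i + Suc r} \<inter> {x. pth_digit p x = d}"
    by auto
  have "real (Ncount p d (q * 10 ^ i + r)) = (\<Sum>x\<in>{10 ^ (p - 1)..<q * 10 ^ i + Suc r}. ?c x)"
    unfolding Ncount_def counted_set by (simp only: sum_of_bool_eq finite_atLeastLessThan)
  also have "\<dots> = (\<Sum>x\<in>{10 ^ (p - 1)..<10 ^ (p - 1) * 10 ^ i}. ?c x)
      + (\<Sum>x\<in>{10 ^ (p - 1) * 10 ^ i..<q * 10 ^ i}. ?c x) + (\<Sum>x\<in>{q * 10 ^ i..<q * 10 ^ i + Suc r}. ?c x)"
    using le by (simp only: sum.atLeastLessThan_concat order.trans[OF le(1,2)])
  also have "(\<Sum>x\<in>{10 ^ (p - 1)..<10 ^ (p - 1) * 10 ^ i}. ?c x) = 10 ^ (p - 2) * (10 ^ i - 1)"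
    by (rule sum_pth_digit_below_power[OF assms(1,2)])
  also have "(\<Sum>x\<in>{10 ^ (p - 1) * 10 ^ i..<q * 10 ^ i}. ?c x)
      = 10 ^ i * (real (q div 10) - 10 ^ (p - 2) + of_bool (d < q mod 10))"
    using assms by (intro sum_pth_digit_mult_power_interval) simp_all
  also have "(\<Sum>x\<in>{q * 10 ^ i..<q * 10 ^ i + Suc r}. ?c x) = (\<Sum>r'<Suc r. ?c (q * 10 ^ i + r'))"
    by (simp add: sum.atLeastLessThan_shift_0 add.commute atLeast0LessThan)
  also have "\<dots> = (\<Sum>r'<Suc r. of_bool (q mod 10 = d))"
    using assms by (intro sum.cong refl) (simp add: pth_digit_mult_power_add)
  finally show ?thesis by (simp add: algebra_simps del: sum_of_bool_eq)
qed

lemma harmonic_sum_ln_bounds: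
  fixes b :: real and T :: nat
  assumes "b > 1"
  shows "ln ((b + real T) / b) \<le> (\<Sum>r<T. 1 / (b + real r))"
    and "(\<Sum>r<T. 1 / (b + real r)) \<le> ln ((b - 1 + real T) / (b - 1))"
proof -
  have "ln ((b + real T) / b) = (\<Sum>r<T. ln (b + real (Suc r)) - ln (b + real r))"
    using assms by (subst sum_lessThan_telescope) (simp add: ln_div)
  also have "\<dots> \<le> (\<Sum>r<T. 1 / (b + real r))"
  proof (rule sum_mono)
    fix r
    have "ln (b + real (Suc r)) - ln (b + real r) \<le> (b + real (Suc r) - (b + real r)) / (b + real r)"
      using assms by (intro ln_diff_le) auto
    then show "ln (b + real (Suc r)) - ln (b + real r) \<le> 1 / (b + real r)" by simp
  qed
  finally show "ln ((b + real T) / b) \<le> (\<Sum>r<T. 1 / (b + real r))" .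
next
  have "(\<Sum>r<T. 1 / (b + real r)) \<le> (\<Sum>r<T. ln (b - 1 + real (Suc r)) - ln (b - 1 + real r))"
  proof (rule sum_mono)
    fix r
    have "ln (b - 1 + real r) - ln (b + real r) \<le> (b - 1 + real r - (b + real r)) / (b + real r)"
      using assms by (intro ln_diff_le) auto
    then show "1 / (b + real r) \<le> ln (b - 1 + real (Suc r)) - ln (b - 1 + real r)" by simp
  qed
  also have "\<dots> = ln ((b - 1 + real T) / (b - 1))"
    using assms by (subst sum_lessThan_telescope) (simp add: ln_div)
  finally show "(\<Sum>r<T. 1 / (b + real r)) \<le> ln ((b - 1 + real T) / (b - 1))" .
qed

lemma shifted_harmonic_sum_bounds:
  fixes q L :: real and T :: nat
  assumes "1 \<le> L" "L \<le> q" "2 \<le> T"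
  defines "H \<equiv> \<Sum>r<T. 1 / (q * T + real r + 1 - L)"
  shows "ln ((q + 1) / q) \<le> H" and "T * (H - ln ((q + 1) / q)) \<le> 2" and "H \<le> 2"
proof -
  define c where "c = q * T - L"
  have qT: "q * T \<ge> 2 * q" using assms(3) mult_left_mono[of 2 "real T" q] assms(1,2) by simp
  have c_ge: "c \<ge> q * T / 2" using qT assms(2) unfolding c_def by simp
  have c_pos: "c > 0" using c_ge qT assms(1,2) by linarith
  have H_eq: "H = (\<Sum>r<T. 1 / ((c + 1) + real r))"
    unfolding H_def c_def by (simp add: algebra_simps)
  have lower: "ln ((c + 1 + T) / (c + 1)) \<le> H" and upper: "H \<le> ln ((c + T) / c)"
    unfolding H_eq using harmonic_sum_ln_bounds[of "c + 1" T] c_pos by simp_all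
  have "(q + 1) / q \<le> (c + 1 + T) / (c + 1)"
  proof -
    have "c + 1 \<le> q * T" using assms(1) unfolding c_def by simp
    then have "(q + 1) * (c + 1) \<le> q * (c + 1 + T)" by (simp add: algebra_simps)
    then show ?thesis using c_pos assms(1,2) by (simp add: divide_simps mult.commute)
  qed
  then have "ln ((q + 1) / q) \<le> ln ((c + 1 + T) / (c + 1))"
    using c_pos assms(1,2) by (subst ln_le_cancel_iff) auto
  with lower show "ln ((q + 1) / q) \<le> H" by linarith
  have T_div_c: "T / c \<le> 2"
  proof -
    have "1 * real T \<le> q * T" using assms(1,2) by (intro mult_right_mono) auto
    then show ?thesis using c_ge c_pos by (simp add: divide_simps)
  qed
  have gap: "(c + T) / c - (q + 1) / q = L / (q * c)"
    using c_pos assms(1,2) unfolding c_def by (simp add: field_simps)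
  have "H - ln ((q + 1) / q) \<le> ln ((c + T) / c) - ln ((q + 1) / q)"
    using upper by simp
  also have "\<dots> \<le> (L / (q * c)) / ((q + 1) / q)"
    unfolding gap[symmetric] using c_pos assms(1,2) by (intro ln_diff_le) auto
  also have "\<dots> \<le> (L / (q * c)) / 1"
    using c_pos assms(1,2) by (intro divide_left_mono) auto
  finally have "T * (H - ln ((q + 1) / q)) \<le> T * (L / (q * c))"
    by (intro mult_left_mono) auto
  also have "\<dots> = (T / c) * (L / q)" by simp
  also have "\<dots> \<le> T / c"
    using c_pos assms(1,2) by (intro mult_left_le) auto
  finally show "T * (H - ln ((q + 1) / q)) \<le> 2" using T_div_c by linarith
  have "ln ((c + T) / c) \<le> (c + T) / c - 1"
    using c_pos by (intro ln_le_minus_one) auto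
  also have "\<dots> = T / c" using c_pos by (simp add: field_simps)
  finally show "H \<le> 2" using upper T_div_c by linarith
qed

lemma sum_linear_fraction_estimate:
  fixes \<alpha> \<beta> a q L :: real and T :: nat
  assumes "1 \<le> L" "L \<le> q" "2 \<le> T"
  shows "\<bar>(\<Sum>r<T. (T * \<alpha> - a + \<beta> * (real r + 1)) / (q * T + real r + 1 - L))
      - T * ((\<alpha> - \<beta> * q) * ln ((q + 1) / q) + \<beta>)\<bar> \<le> 2 * \<bar>\<alpha> - \<beta> * q\<bar> + 2 * \<bar>\<beta> * L - a\<bar>"
proof -
  define H where "H = (\<Sum>r<T. 1 / (q * T + real r + 1 - L))"
  define \<gamma> where "\<gamma> = \<alpha> - \<beta> * q"
  define \<delta> where "\<delta> = \<beta> * L - a"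
  define l where "l = ln ((q + 1) / q)"
  note H_bounds = shifted_harmonic_sum_bounds[OF assms, folded H_def, folded l_def]
  have "(\<Sum>r<T. (T * \<alpha> - a + \<beta> * (real r + 1)) / (q * T + real r + 1 - L))
      = (\<Sum>r<T. \<beta> + (T * \<gamma> + \<delta>) * (1 / (q * T + real r + 1 - L)))"
  proof (rule sum.cong[OF refl])
    fix r
    have "L * 1 \<le> q * T" using assms by (intro mult_mono) auto
    then have "q * T + real r + 1 - L \<noteq> 0" by linarith
    then show "(T * \<alpha> - a + \<beta> * (real r + 1)) / (q * T + real r + 1 - L)
        = \<beta> + (T * \<gamma> + \<delta>) * (1 / (q * T + real r + 1 - L))"
      unfolding \<gamma>_def \<delta>_def by (simp add: field_simps)
  qed
  also have "\<dots> = T * \<beta> + (T * \<gamma> + \<delta>) * H"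
    unfolding H_def by (simp add: sum.distrib sum_distrib_left)
  finally have split: "(\<Sum>r<T. (T * \<alpha> - a + \<beta> * (real r + 1)) / (q * T + real r + 1 - L))
      - T * (\<gamma> * l + \<beta>) = \<gamma> * (T * (H - l)) + \<delta> * H"
    by (simp add: algebra_simps)
  have "0 \<le> l" unfolding l_def using assms(1,2) by simp
  then have "\<bar>T * (H - l)\<bar> \<le> 2" and "\<bar>H\<bar> \<le> 2" using H_bounds by auto
  then have "\<bar>\<gamma> * (T * (H - l))\<bar> \<le> \<bar>\<gamma>\<bar> * 2" and "\<bar>\<delta> * H\<bar> \<le> \<bar>\<delta>\<bar> * 2"
    unfolding abs_mult by (simp_all add: mult_left_mono)
  with split show ?thesis unfolding \<gamma>_def \<delta>_def l_def by linarith
qed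

lemma tendsto_of_nat_div_power_minus_one:
  fixes r :: real
  assumes "r > 1"
  shows "(\<lambda>j. real j / (r ^ j - 1)) \<longlonglongrightarrow> 0"
proof -
  have "(\<lambda>j. real j / r ^ j) \<longlonglongrightarrow> 0"
    using lim_n_over_pown[of r] assms by simp
  moreover have "(\<lambda>j. 1 - (1 / r) ^ j) \<longlonglongrightarrow> 1 - 0"
    using assms by (intro tendsto_diff tendsto_const LIMSEQ_power_zero) simp
  ultimately have "(\<lambda>j. (real j / r ^ j) / (1 - (1 / r) ^ j)) \<longlonglongrightarrow> 0 / (1 - 0)"
    by (intro tendsto_divide) simp_all
  moreover have "(\<lambda>j. (real j / r ^ j) / (1 - (1 / r) ^ j)) = (\<lambda>j. real j / (r ^ j - 1))"
  proof
    fix j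
    have "1 - (1 / r) ^ j = (r ^ j - 1) / r ^ j"
      using assms by (simp add: power_one_over diff_divide_distrib)
    then show "(real j / r ^ j) / (1 - (1 / r) ^ j) = real j / (r ^ j - 1)" using assms by simp
  qed
  ultimately show ?thesis by (simp only: diff_zero div_0)
qed

lemma sum_div_geometric_tendsto:
  fixes B :: "nat \<Rightarrow> real" and r c :: real
  assumes "r > 1" and "Bseq (\<lambda>i. B i - c * r ^ i)"
  shows "(\<lambda>j. (\<Sum>i<j. B i) / (r ^ j - 1)) \<longlonglongrightarrow> c / (r - 1)"
proof -
  define e where "e i = B i - c * r ^ i" for i
  obtain K where K: "\<And>i. \<bar>e i\<bar> \<le> K"
    using BseqE[OF assms(2)] unfolding e_def real_norm_def by blast
  have ratio: "(\<lambda>j. real j / (r ^ j - 1)) \<longlonglongrightarrow> 0"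
    using assms(1) by (rule tendsto_of_nat_div_power_minus_one)
  have errors: "(\<lambda>j. (\<Sum>i<j. e i) / (r ^ j - 1)) \<longlonglongrightarrow> 0"
  proof (rule tendsto_0_le[OF ratio always_eventually], intro allI)
    fix j
    have "\<bar>\<Sum>i<j. e i\<bar> \<le> real j * K"
      using order.trans[OF sum_abs sum_mono[of "{..<j}" "\<lambda>i. \<bar>e i\<bar>" "\<lambda>_. K"]] K by simp
    moreover have "r ^ j - 1 \<ge> 0" using assms(1) by simp
    ultimately show "norm ((\<Sum>i<j. e i) / (r ^ j - 1)) \<le> norm (real j / (r ^ j - 1)) * K"
      by (simp add: abs_divide divide_right_mono)
  qed
  have "(\<Sum>i<j. B i) / (r ^ j - 1) = c / (r - 1) + (\<Sum>i<j. e i) / (r ^ j - 1)" if "j \<ge> 1" for j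
  proof -
    have "r ^ j > 1" using assms(1) that by (simp add: one_less_power)
    have "(\<Sum>i<j. B i) = (\<Sum>i<j. e i) + c * ((r ^ j - 1) / (r - 1))"
      using assms(1) by (simp add: e_def sum_subtractf geometric_sum sum_distrib_left[symmetric])
    then have "(\<Sum>i<j. B i) / (r ^ j - 1) = (\<Sum>i<j. e i) / (r ^ j - 1) + c * ((r ^ j - 1) / (r - 1)) / (r ^ j - 1)"
      by (simp add: add_divide_distrib)
    also have "c * ((r ^ j - 1) / (r - 1)) / (r ^ j - 1) = c / (r - 1)"
      using \<open>r ^ j > 1\<close> by simp
    finally show ?thesis by simp
  qed
  then have "\<forall>\<^sub>F j in sequentially. c / (r - 1) + (\<Sum>i<j. e i) / (r ^ j - 1) = (\<Sum>i<j. B i) / (r ^ j - 1)"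
    by (intro eventually_sequentiallyI[of 1]) simp
  with tendsto_add[OF tendsto_const errors, of "c / (r - 1)"] show ?thesis
    by (auto intro: Lim_transform_eventually)
qed

(* For 10^(p-1) <= q < 10^p, the limit as i -> oo of 10^-i times the sum of
   N_d(q 10^i + r) / (q 10^i + r + 1 - 10^(p-1)) over r < 10^i; it does not depend on p. *)
definition prefix_weight :: "nat \<Rightarrow> nat \<Rightarrow> real" where
  "prefix_weight d q = (real (q div 10) + of_bool (d < q mod 10) - of_bool (q mod 10 = d) * real q)
      * ln ((real q + 1) / real q) + of_bool (q mod 10 = d)"

definition block_sum :: "nat \<Rightarrow> nat \<Rightarrow> nat \<Rightarrow> real" where
  "block_sum p d i = (\<Sum>m\<in>{10 ^ (p - 1) * 10 ^ i..<10 ^ p * 10 ^ i}. real (Ncount p d m) / (real m + 1 - 10 ^ (p - 1)))"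

lemma block_sum_prefix_estimate:
  assumes "p \<ge> 2" "d \<le> 9" "i \<ge> 1" "10 ^ (p - 1) \<le> q" "q < 10 ^ p"
  defines "\<beta> \<equiv> of_bool (q mod 10 = d)"
  shows "\<bar>(\<Sum>r<10 ^ i. real (Ncount p d (q * 10 ^ i + r)) / (real (q * 10 ^ i + r) + 1 - 10 ^ (p - 1)))
      - 10 ^ i * prefix_weight d q\<bar>
    \<le> 2 * \<bar>real (q div 10) + of_bool (d < q mod 10) - \<beta> * q\<bar> + 2 * \<bar>\<beta> * 10 ^ (p - 1) - 10 ^ (p - 2)\<bar>"
proof -
  define T :: nat where "T = 10 ^ i"
  define \<alpha> where "\<alpha> = real (q div 10) + of_bool (d < q mod 10)"
  have "2 \<le> T" unfolding T_def using power_increasing[OF assms(3), of "10::nat"] by simp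
  have sum_eq: "(\<Sum>r<T. real (Ncount p d (q * T + r)) / (real (q * T + r) + 1 - 10 ^ (p - 1)))
      = (\<Sum>r<T. (T * \<alpha> - 10 ^ (p - 2) + \<beta> * (real r + 1)) / (real q * T + real r + 1 - 10 ^ (p - 1)))"
    using assms unfolding T_def \<alpha>_def \<beta>_def by (intro sum.cong refl) (simp add: Ncount_mult_power_add)
  have weight_eq: "10 ^ i * prefix_weight d q = T * ((\<alpha> - \<beta> * real q) * ln ((real q + 1) / real q) + \<beta>)"
    unfolding prefix_weight_def \<alpha>_def \<beta>_def T_def by simp
  have "\<bar>(\<Sum>r<T. (T * \<alpha> - 10 ^ (p - 2) + \<beta> * (real r + 1)) / (real q * T + real r + 1 - 10 ^ (p - 1)))
      - T * ((\<alpha> - \<beta> * real q) * ln ((real q + 1) / real q) + \<beta>)\<bar>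
    \<le> 2 * \<bar>\<alpha> - \<beta> * real q\<bar> + 2 * \<bar>\<beta> * 10 ^ (p - 1) - 10 ^ (p - 2)\<bar>"
    using assms(4) \<open>2 \<le> T\<close> by (intro sum_linear_fraction_estimate) auto
  then show ?thesis unfolding sum_eq[unfolded T_def] weight_eq T_def \<alpha>_def .
qed

lemma block_sum_minus_geometric_bounded:
  assumes "p \<ge> 2" "d \<le> 9"
  shows "Bseq (\<lambda>i. block_sum p d i - 10 ^ i * (\<Sum>q\<in>{10 ^ (p - 1)..<10 ^ p}. prefix_weight d q))"
proof -
  define K where "K = (\<Sum>q\<in>{10 ^ (p - 1)..<10 ^ p}.
    2 * \<bar>real (q div 10) + of_bool (d < q mod 10) - of_bool (q mod 10 = d) * real q\<bar>
    + 2 * \<bar>of_bool (q mod 10 = d) * 10 ^ (p - 1) - 10 ^ (p - 2)\<bar>)"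
  have "\<bar>block_sum p d i - 10 ^ i * (\<Sum>q\<in>{10 ^ (p - 1)..<10 ^ p}. prefix_weight d q)\<bar> \<le> K"
    if "i \<ge> 1" for i
  proof -
    have "block_sum p d i - 10 ^ i * (\<Sum>q\<in>{10 ^ (p - 1)..<10 ^ p}. prefix_weight d q)
      = (\<Sum>q\<in>{10 ^ (p - 1)..<10 ^ p}.
          (\<Sum>r<10 ^ i. real (Ncount p d (q * 10 ^ i + r)) / (real (q * 10 ^ i + r) + 1 - 10 ^ (p - 1)))
          - 10 ^ i * prefix_weight d q)"
      unfolding block_sum_def
      by (subst sum_atLeastLessThan_mult_split) (simp_all add: sum_distrib_left sum_subtractf)
    also have "\<bar>\<dots>\<bar> \<le> K"
      unfolding K_def using assms that
      by (intro order.trans[OF sum_abs sum_mono] block_sum_prefix_estimate) auto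
    finally show ?thesis .
  qed
  then have "\<forall>\<^sub>F i in sequentially.
      norm (block_sum p d i - 10 ^ i * (\<Sum>q\<in>{10 ^ (p - 1)..<10 ^ p}. prefix_weight d q)) \<le> norm K"
    by (intro eventually_sequentiallyI[of 1]) force
  then show ?thesis by (rule Bseq_eventually_mono) simp
qed

lemma Pprob_eq_block_sums:
  assumes "p \<ge> 1"
  shows "Pprob d (10 ^ (j + (p - 1)) - 1) p = (\<Sum>i<j. block_sum p d i) / (10 ^ (p - 1) * (10 ^ j - 1))"
proof -
  let ?f = "\<lambda>m. real (Ncount p d m) / (real m + 1 - 10 ^ (p - 1))"
  have "mono (\<lambda>i. (10::nat) ^ (p - 1) * 10 ^ i)"
    by (intro monoI mult_left_mono power_increasing) auto
  moreover have "block_sum p d i = (\<Sum>m\<in>{10 ^ (p - 1) * 10 ^ i..<10 ^ (p - 1) * 10 ^ Suc i}. ?f m)" for i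
  proof -
    have "(10::nat) ^ p = 10 ^ (p - 1) * 10" using assms power_minus_mult[of p "10::nat"] by simp
    then show ?thesis unfolding block_sum_def by (simp add: ac_simps)
  qed
  ultimately have blocks: "(\<Sum>i<j. block_sum p d i) = (\<Sum>m\<in>{10 ^ (p - 1)..<10 ^ (p - 1) * 10 ^ j}. ?f m)"
    using sum_lessThan_consecutive_intervals[of "\<lambda>i. (10::nat) ^ (p - 1) * 10 ^ i" ?f j] by simp
  have N: "10 ^ (j + (p - 1)) - 1 + 1 = 10 ^ (p - 1) * (10::nat) ^ j"
    by (simp add: power_add)
  then have range: "{10 ^ (p - 1)..10 ^ (j + (p - 1)) - 1} = {10 ^ (p - 1)..<10 ^ (p - 1) * (10::nat) ^ j}"
    by (metis atLeastLessThanSuc_atLeastAtMost Suc_eq_plus1)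
  have "real (10 ^ (j + (p - 1)) - 1) + 1 - 10 ^ (p - 1) = 10 ^ (p - 1) * (10 ^ j - 1)"
    using arg_cong[OF N, of real] by (simp add: algebra_simps)
  then show ?thesis unfolding Pprob_def range blocks by simp
qed

lemma Pprob_tendsto_prefix_weights:
  assumes "p \<ge> 2" "d \<le> 9"
  shows "(\<lambda>n. Pprob d (10 ^ n - 1) p)
    \<longlonglongrightarrow> (\<Sum>q\<in>{10 ^ (p - 1)..<10 ^ p}. prefix_weight d q) / (9 * 10 ^ (p - 1))"
proof (rule LIMSEQ_offset[where k = "p - 1"])
  let ?S = "\<Sum>q\<in>{10 ^ (p - 1)..<10 ^ p}. prefix_weight d q"
  have avg: "(\<lambda>j. (\<Sum>i<j. block_sum p d i) / (10 ^ j - 1)) \<longlonglongrightarrow> ?S / (10 - 1)"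
    using block_sum_minus_geometric_bounded[OF assms] by (intro sum_div_geometric_tendsto) (simp_all add: mult.commute)
  have "(\<lambda>j. (\<Sum>i<j. block_sum p d i) / (10 ^ j - 1) / 10 ^ (p - 1)) \<longlonglongrightarrow> ?S / (10 - 1) / 10 ^ (p - 1)"
    by (rule tendsto_divide[OF avg tendsto_const]) simp
  moreover have "(\<Sum>i<j. block_sum p d i) / (10 ^ j - 1) / 10 ^ (p - 1) = Pprob d (10 ^ (j + (p - 1)) - 1) p" for j
    using assms(1) by (subst Pprob_eq_block_sums) (simp_all add: mult.commute)
  ultimately show "(\<lambda>j. Pprob d (10 ^ (j + (p - 1)) - 1) p) \<longlonglongrightarrow> ?S / (9 * 10 ^ (p - 1))"
    by simp
qed

lemma sum_decade_prefix_weight: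
  fixes j d :: nat
  assumes "j \<ge> 1" "d \<le> 9"
  shows "(\<Sum>e<10. prefix_weight d (10 * j + e))
    = (real j + 1) * (ln (10 * real j + 10) - ln (10 * real j + real d + 1))
      + real j * (ln (10 * real j + real d) - ln (10 * real j))
      - (9 * real j + real d) * (ln (10 * real j + real d + 1) - ln (10 * real j + real d)) + 1"
proof -
  define F where "F e = ln (10 * real j + real e)" for e :: nat
  define D where "D e = F (Suc e) - F e" for e
  have weight: "prefix_weight d (10 * j + e)
      = real j * D e + of_bool (d < e) * D e
        - of_bool (e = d) * ((10 * real j + real d) * D d) + of_bool (e = d)"
    if "e < 10" for e
  proof -
    have ln_eq: "ln ((real (10 * j + e) + 1) / real (10 * j + e)) = D e"
      unfolding D_def F_def using assms(1) by (subst ln_div) (auto simp: add.assoc)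
    have "(10 * j + e) div 10 = j" "(10 * j + e) mod 10 = e" using that by simp_all
    then show ?thesis
      unfolding prefix_weight_def ln_eq by (cases "e = d") (simp_all add: algebra_simps)
  qed
  have above_d: "(\<Sum>e<10. of_bool (d < e) * D e) = F 10 - F (Suc d)"
    unfolding D_def using assms(2) by (intro sum_lessThan_of_bool_less_telescope) simp
  have telescope: "(\<Sum>e<10. D e) = F 10 - F 0"
    unfolding D_def by (rule sum_lessThan_telescope)
  have "{..<10} \<inter> {e. e = d} = {d}" using assms(2) by auto
  then have at_d: "(\<Sum>e<10. of_bool (e = d) * x) = x" for x :: real
    by simp
  have "(\<Sum>e<10. prefix_weight d (10 * j + e))
      = (\<Sum>e<10. real j * D e + of_bool (d < e) * D e
          - of_bool (e = d) * ((10 * real j + real d) * D d) + of_bool (e = d))"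
    by (rule sum.cong) (simp_all add: weight)
  also have "\<dots> = real j * (\<Sum>e<10. D e) + (\<Sum>e<10. of_bool (d < e) * D e)
      - (\<Sum>e<10. of_bool (e = d) * ((10 * real j + real d) * D d)) + (\<Sum>e<10. of_bool (e = d) * 1)"
    by (simp only: sum.distrib sum_subtractf sum_distrib_left mult_1_right)
  also have "\<dots> = real j * (F 10 - F 0) + (F 10 - F (Suc d)) - (10 * real j + real d) * D d + 1"
    unfolding telescope above_d at_d ..
  finally have "(\<Sum>e<10. prefix_weight d (10 * j + e))
      = real j * (F 10 - F 0) + (F 10 - F (Suc d)) - (10 * real j + real d) * D d + 1" .
  then show ?thesis unfolding D_def F_def by (simp add: algebra_simps)
qed

lemma sum_prefix_weight_eq_log_sums:
  fixes a M d :: nat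
  assumes "1 \<le> a" "a < M" "d \<le> 9"
  shows "(\<Sum>q\<in>{10 * a..<10 * M}. prefix_weight d q)
    = (\<Sum>j\<in>{a..<M - 1}. (real j + 1) * (ln (10 * real j + 10 + real d) - ln (10 * real j + real d + 1)))
      - (\<Sum>j\<in>{a..<M}. (9 * real j + real d) * (ln (10 * real j + real d + 1) - ln (10 * real j + real d)))
      + real a * (ln (10 * real a + real d) - ln (10 * real a))
      + real M * (ln (10 * real M) - ln (10 * real M - 9 + real d)) + (real M - real a)"
proof -
  obtain n where M: "M = Suc n" and "a \<le> n" using assms(2) by (metis less_eq_Suc_le Suc_le_D Suc_le_mono)
  define u where "u j = (real j + 1) * (ln (10 * real j + 10) - ln (10 * real j + real d + 1))" for j :: nat
  define v where "v j = real j * (ln (10 * real j + real d) - ln (10 * real j))" for j :: nat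
  define D where "D j = (9 * real j + real d) * (ln (10 * real j + real d + 1) - ln (10 * real j + real d))" for j :: nat
  have "(\<Sum>q\<in>{10 * a..<10 * M}. prefix_weight d q) = (\<Sum>j\<in>{a..<M}. \<Sum>e<10. prefix_weight d (10 * j + e))"
    using sum_atLeastLessThan_mult_split[of a M "prefix_weight d" 10] assms(2) by (simp add: mult.commute)
  also have "\<dots> = (\<Sum>j\<in>{a..<M}. (u j + v j) - D j + 1)"
    using assms(1,3) by (intro sum.cong refl, subst sum_decade_prefix_weight) (auto simp: u_def v_def D_def)
  also have "\<dots> = (\<Sum>j\<in>{a..<M}. u j + v j) - (\<Sum>j\<in>{a..<M}. D j) + (real M - real a)"
    using assms(2) by (simp add: sum.distrib sum_subtractf of_nat_diff)
  also have "(\<Sum>j\<in>{a..<M}. u j + v j) = v a + (\<Sum>j\<in>{a..<n}. u j + v (Suc j)) + u n"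
    unfolding M using \<open>a \<le> n\<close> by (rule sum_atLeastLessThan_Suc_regroup)
  also have "(\<Sum>j\<in>{a..<n}. u j + v (Suc j))
      = (\<Sum>j\<in>{a..<n}. (real j + 1) * (ln (10 * real j + 10 + real d) - ln (10 * real j + real d + 1)))"
    unfolding u_def v_def by (intro sum.cong refl) (simp add: algebra_simps)
  also have "u n = real M * (ln (10 * real M) - ln (10 * real M - 9 + real d))"
    unfolding u_def M by (simp add: algebra_simps)
  finally show ?thesis unfolding v_def D_def M by (simp add: algebra_simps)
qed

lemma log_sums_eq_ndp_mdp_ldp_kdp:
  assumes "p \<ge> 2"
  defines "a \<equiv> 10 ^ (p - 2) :: nat"
  shows "(\<Sum>j\<in>{a..<10 * a - 1}. (real j + 1) * (ln (10 * real j + 10 + real d) - ln (10 * real j + real d + 1)))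
      = ndp d p + mdp d p"
    and "(\<Sum>j\<in>{a..<10 * a}. (9 * real j + real d) * (ln (10 * real j + real d + 1) - ln (10 * real j + real d)))
      = 9 * ldp d p + real d * kdp d p"
proof -
  have a_ge: "1 \<le> a" unfolding a_def by simp
  have "(10::nat) ^ (p - 1) = 10 * a"
    unfolding a_def using assms(1) power_minus_mult[of "p - 1" "10::nat"]
    by (simp add: mult.commute diff_diff_left numeral_2_eq_2)
  then have ranges: "{10 ^ (p - 2)..10 ^ (p - 1) - 1} = {a..<10 * a}"
      "{10 ^ (p - 2)..10 ^ (p - 1) - 2} = {a..<10 * a - 1}"
    unfolding a_def[symmetric] using a_ge by auto
  have pos: "0 < 10 * real j + real d" if "a \<le> j" for j using that a_ge by simp
  have "kdp d p = (\<Sum>j\<in>{a..<10 * a}. ln (10 * real j + real d + 1) - ln (10 * real j + real d))"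
    and "ldp d p = (\<Sum>j\<in>{a..<10 * a}. real j * (ln (10 * real j + real d + 1) - ln (10 * real j + real d)))"
    unfolding kdp_def ldp_def ranges using pos by (auto intro!: sum.cong simp: ln_div add_pos_nonneg)
  then show "(\<Sum>j\<in>{a..<10 * a}. (9 * real j + real d) * (ln (10 * real j + real d + 1) - ln (10 * real j + real d)))
      = 9 * ldp d p + real d * kdp d p"
    by (simp add: distrib_right sum.distrib sum_distrib_left mult.assoc)
  have "mdp d p = (\<Sum>j\<in>{a..<10 * a - 1}. ln (10 * real j + 10 + real d) - ln (10 * real j + real d + 1))"
    and "ndp d p = (\<Sum>j\<in>{a..<10 * a - 1}. real j * (ln (10 * real j + 10 + real d) - ln (10 * real j + real d + 1)))"
    unfolding mdp_def ndp_def ranges using pos by (auto intro!: sum.cong simp: ln_div add_pos_nonneg algebra_simps)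
  then show "(\<Sum>j\<in>{a..<10 * a - 1}. (real j + 1) * (ln (10 * real j + 10 + real d) - ln (10 * real j + real d + 1)))
      = ndp d p + mdp d p"
    by (simp add: distrib_right sum.distrib)
qed

lemma sum_prefix_weight_closed_form:
  assumes "p \<ge> 2" "d \<le> 9"
  shows "(\<Sum>q\<in>{10 ^ (p - 1)..<10 ^ p}. prefix_weight d q) / (9 * 10 ^ (p - 1)) =
    1 / 10 + (ndp d p + mdp d p - 9 * ldp d p - real d * kdp d p) / (9 * 10 ^ (p - 1))
    + 1 / 90 * ln ((10 ^ (p - 1) + real d) / 10 ^ (p - 1))
    + 1 / 9 * ln (10 ^ p / (10 ^ p - 10 + real d + 1))"
proof -
  define a :: nat where "a = 10 ^ (p - 2)"
  have a_ge: "1 \<le> a" unfolding a_def by simp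
  have pow: "(10::nat) ^ (p - 1) = 10 * a" "(10::nat) ^ p = 10 * (10 * a)"
    unfolding a_def using assms(1) power_minus_mult[of p "10::nat"] power_minus_mult[of "p - 1" "10::nat"]
    by (simp_all add: mult.commute diff_diff_left numeral_2_eq_2)
  have pow_real: "(10::real) ^ (p - 1) = 10 * real a" "(10::real) ^ p = 100 * real a"
    using arg_cong[OF pow(1), of real] arg_cong[OF pow(2), of real] by simp_all
  have "(\<Sum>q\<in>{10 ^ (p - 1)..<10 ^ p}. prefix_weight d q) = (\<Sum>q\<in>{10 * a..<10 * (10 * a)}. prefix_weight d q)"
    unfolding pow ..
  also have "\<dots> = ndp d p + mdp d p - (9 * ldp d p + real d * kdp d p)
        + real a * (ln (10 * real a + real d) - ln (10 * real a))
        + real (10 * a) * (ln (10 * real (10 * a)) - ln (10 * real (10 * a) - 9 + real d)) + (real (10 * a) - real a)"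
    unfolding log_sums_eq_ndp_mdp_ldp_kdp[OF assms(1), folded a_def, symmetric]
    using a_ge assms(2) by (intro sum_prefix_weight_eq_log_sums) auto
  finally have sum_eq: "(\<Sum>q\<in>{10 ^ (p - 1)..<10 ^ p}. prefix_weight d q)
      = ndp d p + mdp d p - 9 * ldp d p - real d * kdp d p
        + real a * (ln (10 * real a + real d) - ln (10 * real a))
        + 10 * real a * (ln (100 * real a) - ln (100 * real a - 9 + real d)) + 9 * real a"
    by simp
  have ln_eqs: "ln ((10 ^ (p - 1) + real d) / 10 ^ (p - 1)) = ln (10 * real a + real d) - ln (10 * real a)"
    "ln (10 ^ p / (10 ^ p - 10 + real d + 1)) = ln (100 * real a) - ln (100 * real a - 9 + real d)"
    unfolding pow_real using a_ge by (simp_all add: ln_div)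
  have "(N + real a * X + 10 * real a * Y + 9 * real a) / (9 * (10 * real a))
      = 1 / 10 + N / (9 * (10 * real a)) + 1 / 90 * X + 1 / 9 * Y"
    for N X Y :: real
    using a_ge by (simp add: field_simps)
  then show ?thesis unfolding ln_eqs unfolding sum_eq pow_real .
qed

theorem proposition2:
  fixes p d :: nat
  assumes "p \<ge> 2" and "d \<le> 9"
  shows "(\<lambda>n. Pprob d (10 ^ n - 1) p) \<longlonglongrightarrow>
    1 / 10 + (ndp d p + mdp d p - 9 * ldp d p - real d * kdp d p) / (9 * 10 ^ (p - 1))
    + 1 / 90 * ln ((10 ^ (p - 1) + real d) / 10 ^ (p - 1))
    + 1 / 9 * ln (10 ^ p / (10 ^ p - 10 + real d + 1))"
  using Pprob_tendsto_prefix_weights[OF assms] unfolding sum_prefix_weight_closed_form[OF assms] .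

end
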